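(* Let $R$ be an $\mathbb{N}$-graded domain and let $F_1,\ldots,F_n$ be a regular sequence of homogeneous elements of $R$ that generate a prime ideal $P$. Let $f_1,\ldots,f_n \in R$ be elements whose leading forms are $F_1,\ldots,F_n$ respectively. Then $f_1,\ldots,f_n$ generate a prime ideal of $R$.
   Context: The leading form of a nonzero element of an $\mathbb{N}$-graded ring is its nonzero homogeneous component of highest degree. *)

theory Defs
  imports Main
begin

definition graded_decomp :: "(nat \<Rightarrow> 'a::comm_ring_1 set) \<Rightarrow> 'a \<Rightarrow> (nat \<Rightarrow> 'a) \<Rightarrow> bool" where
  "graded_decomp G x c \<longleftrightarrow> finite {d. c d \<noteq> 0} \<and> (\<forall>d. c d \<in> G d) \<and> x = (\<Sum>d\<in>{d. c d \<noteq> 0}. c d)"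

definition graded_ring :: "(nat \<Rightarrow> 'a::comm_ring_1 set) \<Rightarrow> bool" where
  "graded_ring G \<longleftrightarrow>
     (\<forall>d. 0 \<in> G d \<and> (\<forall>x\<in>G d. \<forall>y\<in>G d. x + y \<in> G d \<and> - x \<in> G d)) \<and>
     (\<forall>d e. \<forall>x\<in>G d. \<forall>y\<in>G e. x * y \<in> G (d + e)) \<and>
     (\<forall>x. \<exists>!c. graded_decomp G x c)"

definition homogeneous :: "(nat \<Rightarrow> 'a::comm_ring_1 set) \<Rightarrow> 'a \<Rightarrow> bool" where
  "homogeneous G x \<longleftrightarrow> (\<exists>d. x \<in> G d)"

definition component :: "(nat \<Rightarrow> 'a::comm_ring_1 set) \<Rightarrow> nat \<Rightarrow> 'a \<Rightarrow> 'a" where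
  "component G d x = (THE c. graded_decomp G x c) d"

definition leading_form :: "(nat \<Rightarrow> 'a::comm_ring_1 set) \<Rightarrow> 'a \<Rightarrow> 'a" where
  "leading_form G x = component G (Max {d. component G d x \<noteq> 0}) x"

definition gen_ideal :: "(nat \<Rightarrow> 'a::comm_ring_1) \<Rightarrow> nat \<Rightarrow> 'a set" where
  "gen_ideal F k = {\<Sum>j<k. r j * F j | r. True}"

definition prime_ideal :: "'a::comm_ring_1 set \<Rightarrow> bool" where
  "prime_ideal P \<longleftrightarrow> 0 \<in> P \<and> (\<forall>x\<in>P. \<forall>y\<in>P. x + y \<in> P) \<and> (\<forall>r. \<forall>x\<in>P. r * x \<in> P)
     \<and> P \<noteq> UNIV \<and> (\<forall>a b. a * b \<in> P \<longrightarrow> a \<in> P \<or> b \<in> P)"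

definition regular_sequence :: "(nat \<Rightarrow> 'a::comm_ring_1) \<Rightarrow> nat \<Rightarrow> bool" where
  "regular_sequence F n \<longleftrightarrow>
     (\<forall>i<n. \<forall>x. x * F i \<in> gen_ideal F i \<longrightarrow> x \<in> gen_ideal F i) \<and> gen_ideal F n \<noteq> UNIV"

end

theory Submission
  imports Defs
begin

text \<open>
  The leading form of every nonzero g in J = (f_1, ..., f_n) lies in P = (F_1, ..., F_n).
  This is shown by induction on n: write g = a f_n + b with b in (f_1, ..., f_(n-1)). If the
  leading forms of a f_n and b do not cancel, the claim follows from the induction hypothesis;
  if they cancel, regularity of F_n puts the leading form of a into (F_1, ..., F_(n-1)), which
  allows to replace a by an element of smaller degree without changing g.
  Conversely, an element whose leading form lies in P can be lowered in degree modulo J,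
  so every element outside J is congruent modulo J to one whose leading form lies outside P.
  Since leading forms are multiplicative in a domain, primality of P transfers to J.
\<close>

lemma gen_ideal_memI: "x = (\<Sum>j<k. r j * F j) \<Longrightarrow> x \<in> gen_ideal F k"
  unfolding gen_ideal_def by blast

lemma gen_ideal_zero_gens [simp]: "gen_ideal F 0 = {0}"
  unfolding gen_ideal_def by simp

lemma gen_ideal_zero: "0 \<in> gen_ideal F k"
  by (rule gen_ideal_memI[where r="\<lambda>_. 0"]) simp

lemma gen_ideal_add: "x \<in> gen_ideal F k \<Longrightarrow> y \<in> gen_ideal F k \<Longrightarrow> x + y \<in> gen_ideal F k"
proof -
  assume "x \<in> gen_ideal F k" "y \<in> gen_ideal F k"
  then obtain r r' where "x = (\<Sum>j<k. r j * F j)" "y = (\<Sum>j<k. r' j * F j)"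
    unfolding gen_ideal_def by auto
  then have "x + y = (\<Sum>j<k. (r j + r' j) * F j)" by (simp add: sum.distrib distrib_right)
  then show ?thesis by (rule gen_ideal_memI)
qed

lemma gen_ideal_mult: "x \<in> gen_ideal F k \<Longrightarrow> c * x \<in> gen_ideal F k"
proof -
  assume "x \<in> gen_ideal F k"
  then obtain r where "x = (\<Sum>j<k. r j * F j)" unfolding gen_ideal_def by auto
  then have "c * x = (\<Sum>j<k. (c * r j) * F j)" by (simp add: sum_distrib_left mult.assoc)
  then show ?thesis by (rule gen_ideal_memI)
qed

lemma gen_ideal_uminus: "x \<in> gen_ideal F k \<Longrightarrow> - x \<in> gen_ideal F k"
  using gen_ideal_mult[of x F k "- 1"] by simp

lemma gen_ideal_diff: "x \<in> gen_ideal F k \<Longrightarrow> y \<in> gen_ideal F k \<Longrightarrow> x - y \<in> gen_ideal F k"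
  using gen_ideal_add[of x F k "- y"] gen_ideal_uminus[of y F k] by simp

lemma gen_ideal_sum:
  "finite I \<Longrightarrow> (\<And>i. i \<in> I \<Longrightarrow> h i \<in> gen_ideal F k) \<Longrightarrow> (\<Sum>i\<in>I. h i) \<in> gen_ideal F k"
  by (induction I rule: finite_induct) (simp_all add: gen_ideal_zero gen_ideal_add)

lemma gen_ideal_generator: "j < k \<Longrightarrow> F j \<in> gen_ideal F k"
proof -
  assume "j < k"
  then have "F j = (\<Sum>i<k. if i = j then F i else 0)" by simp
  also have "\<dots> = (\<Sum>i<k. (if i = j then 1 else 0) * F i)" by (rule sum.cong) auto
  finally show ?thesis by (rule gen_ideal_memI)
qed

lemma gen_ideal_mono: "k \<le> l \<Longrightarrow> x \<in> gen_ideal F k \<Longrightarrow> x \<in> gen_ideal F l"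
proof -
  assume "k \<le> l" "x \<in> gen_ideal F k"
  then obtain r where "x = (\<Sum>j<k. r j * F j)" unfolding gen_ideal_def by auto
  also have "\<dots> = (\<Sum>j\<in>{..<l} \<inter> {j. j < k}. r j * F j)"
    using \<open>k \<le> l\<close> by (intro sum.cong) auto
  also have "\<dots> = (\<Sum>j<l. if j < k then r j * F j else 0)"
    by (simp add: sum.inter_restrict)
  also have "\<dots> = (\<Sum>j<l. (if j < k then r j else 0) * F j)"
    by (rule sum.cong) auto
  finally show ?thesis by (rule gen_ideal_memI)
qed

lemma gen_ideal_SucE:
  assumes "x \<in> gen_ideal F (Suc k)"
  obtains a b where "b \<in> gen_ideal F k" "x = a * F k + b"
proof -
  obtain r where "x = (\<Sum>j<Suc k. r j * F j)"
    using assms unfolding gen_ideal_def by auto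
  then have "x = r k * F k + (\<Sum>j<k. r j * F j)" by simp
  moreover have "(\<Sum>j<k. r j * F j) \<in> gen_ideal F k" by (rule gen_ideal_memI) simp
  ultimately show ?thesis using that by blast
qed

\<comment> \<open>deg G 0 = Max {} is an unspecified value\<close>
definition deg :: "(nat \<Rightarrow> 'a::comm_ring_1 set) \<Rightarrow> 'a \<Rightarrow> nat" where
  "deg G x = Max {d. component G d x \<noteq> 0}"

lemma leading_form_eq_component_deg: "leading_form G x = component G (deg G x) x"
  by (simp add: leading_form_def deg_def)

context
  fixes G :: "nat \<Rightarrow> 'a::comm_ring_1 set"
  assumes graded: "graded_ring G"
begin

lemma zero_in_grade: "0 \<in> G d"
  using graded by (simp add: graded_ring_def)

lemma add_in_grade: "x \<in> G d \<Longrightarrow> y \<in> G d \<Longrightarrow> x + y \<in> G d"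
  using graded by (simp add: graded_ring_def)

lemma uminus_in_grade: "x \<in> G d \<Longrightarrow> - x \<in> G d"
  using graded by (simp add: graded_ring_def)

lemma mult_in_grade: "x \<in> G d \<Longrightarrow> y \<in> G e \<Longrightarrow> x * y \<in> G (d + e)"
  using graded by (simp add: graded_ring_def)

lemma graded_decomp_component: "graded_decomp G x (\<lambda>d. component G d x)"
proof -
  have "\<exists>!c. graded_decomp G x c" using graded by (simp add: graded_ring_def)
  then have "graded_decomp G x (THE c. graded_decomp G x c)" by (rule theI')
  then show ?thesis by (simp add: component_def)
qed

lemma component_eqI: "graded_decomp G x c \<Longrightarrow> component G d x = c d"
proof -
  assume c: "graded_decomp G x c"
  have "\<exists>!c. graded_decomp G x c" using graded by (simp add: graded_ring_def)
  then have "(THE c. graded_decomp G x c) = c" using the1_equality c by metis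
  then show ?thesis by (simp add: component_def)
qed

lemma graded_decompI:
  assumes "finite S" "\<And>d. d \<notin> S \<Longrightarrow> c d = 0" "\<And>d. c d \<in> G d" "x = sum c S"
  shows "graded_decomp G x c"
proof -
  have sub: "{d. c d \<noteq> 0} \<subseteq> S" using assms(2) by blast
  have "sum c S = sum c {d. c d \<noteq> 0}"
    by (rule sum.mono_neutral_right[OF assms(1) sub]) auto
  then show ?thesis unfolding graded_decomp_def
    using assms finite_subset[OF sub] by auto
qed

lemma component_in_grade: "component G d x \<in> G d"
  using graded_decomp_component[of x] by (simp add: graded_decomp_def)

lemma finite_component_support: "finite {d. component G d x \<noteq> 0}"
  using graded_decomp_component[of x] by (simp add: graded_decomp_def)

lemma sum_components:
  assumes "finite S" "{d. component G d x \<noteq> 0} \<subseteq> S"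
  shows "x = (\<Sum>d\<in>S. component G d x)"
proof -
  have "x = (\<Sum>d\<in>{d. component G d x \<noteq> 0}. component G d x)"
    using graded_decomp_component[of x] by (simp add: graded_decomp_def)
  also have "\<dots> = (\<Sum>d\<in>S. component G d x)"
    by (rule sum.mono_neutral_left[OF assms]) auto
  finally show ?thesis .
qed

lemma component_homogeneous: "y \<in> G e \<Longrightarrow> component G d y = (if d = e then y else 0)"
  by (rule component_eqI, rule graded_decompI[where S="{e}"]) (use zero_in_grade in auto)

lemma component_zero [simp]: "component G d 0 = 0"
  using component_homogeneous[OF zero_in_grade[of 0], of d] by simp

lemma component_add: "component G d (x + y) = component G d x + component G d y"
proof (rule component_eqI, rule graded_decompI)
  let ?S = "{d. component G d x \<noteq> 0} \<union> {d. component G d y \<noteq> 0}"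
  show "finite ?S" using finite_component_support by simp
  then show "x + y = (\<Sum>d\<in>?S. component G d x + component G d y)"
    using sum_components[of ?S x] sum_components[of ?S y] by (simp add: sum.distrib)
qed (auto intro: add_in_grade component_in_grade)

lemma component_uminus: "component G d (- x) = - component G d x"
proof (rule component_eqI, rule graded_decompI)
  show "- x = (\<Sum>d\<in>{d. component G d x \<noteq> 0}. - component G d x)"
    using sum_components[OF finite_component_support, of x] by (simp add: sum_negf)
qed (auto intro: uminus_in_grade component_in_grade finite_component_support)

lemma component_diff: "component G d (x - y) = component G d x - component G d y"
  using component_add[of d x "- y"] component_uminus[of d y] by simp

lemma component_sum: "finite I \<Longrightarrow> component G d (\<Sum>i\<in>I. h i) = (\<Sum>i\<in>I. component G d (h i))"
  by (induction I rule: finite_induct) (auto simp: component_add)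

lemma component_mult_homogeneous:
  assumes y: "y \<in> G e"
  shows "component G m (x * y) = (if e \<le> m then component G (m - e) x * y else 0)"
proof (rule component_eqI, rule graded_decompI)
  let ?T = "{d. component G d x \<noteq> 0}"
  let ?c = "\<lambda>m. if e \<le> m then component G (m - e) x * y else 0"
  show "finite ((+) e ` ?T)" using finite_component_support by simp
  show "?c d = 0" if "d \<notin> (+) e ` ?T" for d
  proof (cases "e \<le> d")
    case True
    then have "d = e + (d - e)" by simp
    then have "component G (d - e) x = 0"
      using that by (metis (mono_tags, lifting) image_eqI mem_Collect_eq)
    then show ?thesis by simp
  qed simp
  show "?c d \<in> G d" for d
    using mult_in_grade[OF component_in_grade y, of "d - e" x] zero_in_grade by auto
  have "(\<Sum>d\<in>(+) e ` ?T. ?c d) = (\<Sum>d\<in>?T. component G d x) * y"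
    by (simp add: sum.reindex sum_distrib_right)
  then show "x * y = sum ?c ((+) e ` ?T)"
    using sum_components[OF finite_component_support subset_refl, of x] by simp
qed

lemma component_above_deg: "deg G x < m \<Longrightarrow> component G m x = 0"
  unfolding deg_def using Max_ge[OF finite_component_support] by force

lemma component_deg_nonzero: "x \<noteq> 0 \<Longrightarrow> component G (deg G x) x \<noteq> 0"
proof -
  assume "x \<noteq> 0"
  then have "{d. component G d x \<noteq> 0} \<noteq> {}" using sum_components[of "{}" x] by auto
  then show ?thesis unfolding deg_def using Max_in[OF finite_component_support] by blast
qed

lemma leading_form_zero [simp]: "leading_form G 0 = 0"
  by (simp add: leading_form_eq_component_deg)

lemma leading_form_nonzero: "x \<noteq> 0 \<Longrightarrow> leading_form G x \<noteq> 0"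
  by (simp add: leading_form_eq_component_deg component_deg_nonzero)

lemma deg_eqI:
  "component G D x \<noteq> 0 \<Longrightarrow> (\<And>m. D < m \<Longrightarrow> component G m x = 0) \<Longrightarrow> deg G x = D"
  unfolding deg_def
  by (metis (mono_tags, lifting) Max_ge Max_in empty_iff linorder_neqE_nat mem_Collect_eq
      not_le finite_component_support)

lemma deg_less: "y \<noteq> 0 \<Longrightarrow> (\<And>m. D \<le> m \<Longrightarrow> component G m y = 0) \<Longrightarrow> deg G y < D"
  using component_deg_nonzero not_le by blast

lemma leading_form_homogeneous: "h \<in> G d \<Longrightarrow> h \<noteq> 0 \<Longrightarrow> leading_form G h = h"
  using deg_eqI[of d h] by (simp add: leading_form_eq_component_deg component_homogeneous)

lemma component_mult:
  "component G m (x * y) = (\<Sum>e\<le>m. component G (m - e) x * component G e y)"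
proof -
  let ?N = "max m (deg G y)"
  have "{d. component G d y \<noteq> 0} \<subseteq> {..?N}"
    using component_above_deg[of y] by (force simp: not_less)
  then have "x * y = x * (\<Sum>e\<le>?N. component G e y)"
    using sum_components[of "{..?N}" y] by simp
  then have "x * y = (\<Sum>e\<le>?N. x * component G e y)"
    by (simp add: sum_distrib_left)
  then have "component G m (x * y) = (\<Sum>e\<le>?N. component G m (x * component G e y))"
    by (simp add: component_sum)
  also have "\<dots> = (\<Sum>e\<le>?N. if e \<le> m then component G (m - e) x * component G e y else 0)"
    by (simp add: component_mult_homogeneous[OF component_in_grade])
  also have "\<dots> = (\<Sum>e\<in>{..?N} \<inter> {e. e \<le> m}. component G (m - e) x * component G e y)"
    by (simp add: sum.inter_restrict)
  also have "{..?N} \<inter> {e. e \<le> m} = {..m}" by auto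
  finally show ?thesis .
qed

lemma component_mult_deg_add:
  "component G (deg G x + deg G y) (x * y) = leading_form G x * leading_form G y"
  "deg G x + deg G y < m \<Longrightarrow> component G m (x * y) = 0"
proof -
  have vanish: "component G (m - e) x * component G e y = 0"
    if "deg G x + deg G y \<le> m" "e \<le> m" "m \<noteq> deg G x + deg G y \<or> e \<noteq> deg G y" for m e
  proof (cases "e \<le> deg G y")
    case True
    then have "deg G x < m - e" using that by linarith
    then show ?thesis by (simp add: component_above_deg)
  qed (simp add: component_above_deg)
  let ?m = "deg G x + deg G y"
  have "component G ?m (x * y) = (\<Sum>e\<le>?m. component G (?m - e) x * component G e y)"
    by (rule component_mult)
  also have "\<dots> = (\<Sum>e\<in>{deg G y}. component G (?m - e) x * component G e y)"
    by (rule sum.mono_neutral_right) (auto intro: vanish)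
  finally show "component G ?m (x * y) = leading_form G x * leading_form G y"
    by (simp add: leading_form_eq_component_deg)
  show "component G m (x * y) = 0" if "?m < m"
    using that by (simp add: component_mult vanish)
qed

lemma leading_form_add_cases:
  assumes x: "x \<noteq> 0" and y: "y \<noteq> 0"
    and no_cancel: "deg G x = deg G y \<Longrightarrow> leading_form G x + leading_form G y \<noteq> 0"
  shows "leading_form G (x + y) \<in> {leading_form G x, leading_form G y, leading_form G x + leading_form G y}"
proof -
  consider "deg G x < deg G y" | "deg G y < deg G x" | "deg G x = deg G y" by linarith
  then show ?thesis
  proof cases
    case 1
    then have "deg G (x + y) = deg G y"
      by (intro deg_eqI) (simp_all add: component_add component_above_deg component_deg_nonzero y)
    then show ?thesis using 1 by (simp add: leading_form_eq_component_deg component_add component_above_deg)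
  next
    case 2
    then have "deg G (x + y) = deg G x"
      by (intro deg_eqI) (simp_all add: component_add component_above_deg component_deg_nonzero x)
    then show ?thesis using 2 by (simp add: leading_form_eq_component_deg component_add component_above_deg)
  next
    case 3
    then have top_sum: "component G (deg G x) (x + y) = leading_form G x + leading_form G y"
      by (simp add: component_add leading_form_eq_component_deg)
    have "deg G (x + y) = deg G x"
      using 3 no_cancel top_sum by (intro deg_eqI) (simp_all add: component_add component_above_deg)
    then show ?thesis using top_sum by (simp add: leading_form_eq_component_deg)
  qed
qed

lemma leading_form_reduction:
  assumes lf_f: "\<forall>j<k. leading_form G (f j) = F j"
    and lead: "leading_form G a \<in> gen_ideal F k"
  obtains s where "s \<in> gen_ideal f k" "\<And>m. deg G a \<le> m \<Longrightarrow> component G m (a - s) = 0"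
proof -
  obtain c where c: "leading_form G a = (\<Sum>j<k. c j * F j)"
    using lead unfolding gen_ideal_def by auto
  define D where "D = deg G a"
  \<comment> \<open>keep only the part of each coefficient that contributes in degree D\<close>
  define c' where "c' j = (if deg G (f j) \<le> D then component G (D - deg G (f j)) (c j) else 0)" for j
  define s where "s = (\<Sum>j<k. c' j * f j)"
  have "s \<in> gen_ideal f k" unfolding s_def by (rule gen_ideal_memI) simp
  have c'_grade: "c' j \<in> G (D - deg G (f j))" for j
    by (simp add: c'_def component_in_grade zero_in_grade)
  have top: "component G m (c' j * f j) = (if m = D then c' j * F j else 0)"
    if "j < k" "D \<le> m" for j m
  proof (cases "deg G (f j) \<le> D")
    case True
    have "D - deg G (f j) \<le> m" "m - (D - deg G (f j)) = deg G (f j) + (m - D)"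
      using True that(2) by arith+
    then have "component G m (c' j * f j) = component G (deg G (f j) + (m - D)) (f j) * c' j"
      using component_mult_homogeneous[OF c'_grade[of j], of m "f j"]
      by (simp add: mult.commute)
    also have "\<dots> = (if m = D then c' j * F j else 0)"
      using lf_f that(1) component_above_deg[of "f j" "deg G (f j) + (m - D)"] that(2)
      by (auto simp: leading_form_eq_component_deg mult.commute)
    finally show ?thesis .
  qed (simp add: c'_def)
  have "leading_form G a = component G D (leading_form G a)"
    using component_homogeneous[OF component_in_grade, of D D a]
    by (simp add: D_def leading_form_eq_component_deg)
  also have "\<dots> = (\<Sum>j<k. component G D (c j * F j))"
    by (simp add: c component_sum)
  also have "\<dots> = (\<Sum>j<k. c' j * F j)"
  proof (rule sum.cong)
    fix j assume "j \<in> {..<k}"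
    then have "F j \<in> G (deg G (f j))"
      using lf_f component_in_grade by (metis lessThan_iff leading_form_eq_component_deg)
    then show "component G D (c j * F j) = c' j * F j"
      by (simp add: component_mult_homogeneous c'_def)
  qed simp
  finally have lf_a: "leading_form G a = (\<Sum>j<k. c' j * F j)" .
  have "component G m (a - s) = 0" if "D \<le> m" for m
  proof (cases "m = D")
    case True
    then show ?thesis using lf_a top
      by (simp add: s_def component_diff component_sum leading_form_eq_component_deg D_def)
  next
    case False
    then show ?thesis using that top component_above_deg[of a m]
      by (simp add: s_def component_diff component_sum D_def)
  qed
  with \<open>s \<in> gen_ideal f k\<close> show thesis using that D_def by blast
qed

lemma gen_ideal_eq_UNIV_if_grades_contained:
  assumes "\<And>d. G d \<subseteq> gen_ideal F k"
  shows "gen_ideal F k = UNIV"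
proof -
  have "(\<Sum>d\<in>{d. component G d x \<noteq> 0}. component G d x) \<in> gen_ideal F k" for x
    using assms component_in_grade by (intro gen_ideal_sum finite_component_support) blast
  then show ?thesis using sum_components[OF finite_component_support subset_refl] by auto
qed

lemma exists_congruent_leading_form_notin:
  assumes lf_f: "\<forall>j<n. leading_form G (f j) = F j"
  shows "a \<notin> gen_ideal f n \<Longrightarrow>
    \<exists>a'. a' - a \<in> gen_ideal f n \<and> a' \<noteq> 0 \<and> leading_form G a' \<notin> gen_ideal F n"
proof (induction "deg G a" arbitrary: a rule: less_induct)
  case less
  have "a \<noteq> 0" using less.prems gen_ideal_zero by auto
  show ?case
  proof (cases "leading_form G a \<in> gen_ideal F n")
    case False
    with \<open>a \<noteq> 0\<close> show ?thesis by (intro exI[of _ a]) (simp add: gen_ideal_zero)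
  next
    case True
    then obtain s where s: "s \<in> gen_ideal f n" "\<And>m. deg G a \<le> m \<Longrightarrow> component G m (a - s) = 0"
      using leading_form_reduction[OF lf_f] by blast
    have notin: "a - s \<notin> gen_ideal f n"
      using less.prems gen_ideal_add[OF _ s(1), of "a - s"] by auto
    then have "a - s \<noteq> 0" using gen_ideal_zero[of f n] by auto
    then have "deg G (a - s) < deg G a" using s(2) by (rule deg_less)
    with notin obtain a' where "a' - (a - s) \<in> gen_ideal f n" "a' \<noteq> 0" "leading_form G a' \<notin> gen_ideal F n"
      using less.hyps by blast
    moreover have "a' - a = (a' - (a - s)) - s" by simp
    ultimately show ?thesis using gen_ideal_diff[OF _ s(1), of "a' - (a - s)"] by auto
  qed
qed

end

context
  fixes G :: "nat \<Rightarrow> 'a::idom set"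
  assumes graded: "graded_ring G"
begin

lemma deg_mult:
  assumes "x \<noteq> 0" "y \<noteq> 0"
  shows "deg G (x * y) = deg G x + deg G y"
  using assms graded
  by (intro deg_eqI) (simp_all add: component_mult_deg_add leading_form_nonzero)

lemma leading_form_mult:
  assumes "x \<noteq> 0" "y \<noteq> 0"
  shows "leading_form G (x * y) = leading_form G x * leading_form G y"
  using assms graded by (simp add: leading_form_eq_component_deg deg_mult component_mult_deg_add)

lemma leading_form_mult_add_in_gen_ideal_Suc:
  assumes f: "\<forall>j<Suc k. f j \<noteq> 0 \<and> leading_form G (f j) = F j"
    and regular: "\<And>x. x * F k \<in> gen_ideal F k \<Longrightarrow> x \<in> gen_ideal F k"
    and lower: "\<And>g. g \<in> gen_ideal f k \<Longrightarrow> g \<noteq> 0 \<Longrightarrow> leading_form G g \<in> gen_ideal F k"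
  shows "b \<in> gen_ideal f k \<Longrightarrow> a * f k + b \<noteq> 0 \<Longrightarrow>
    leading_form G (a * f k + b) \<in> gen_ideal F (Suc k)"
proof (induction "deg G a" arbitrary: a b rule: less_induct)
  case less
  have lower_Suc: "leading_form G g \<in> gen_ideal F (Suc k)" if "g \<in> gen_ideal f k" "g \<noteq> 0" for g
    using gen_ideal_mono[OF _ lower[OF that]] by simp
  have fk: "f k \<noteq> 0" "leading_form G (f k) = F k" using f by auto
  show ?case
  proof (cases "a = 0")
    case True
    then show ?thesis using less.prems lower_Suc by simp
  next
    case a: False
    have lf_afk: "leading_form G (a * f k) = leading_form G a * F k"
      using leading_form_mult[OF a fk(1)] fk(2) by simp
    have A: "leading_form G a * F k \<in> gen_ideal F (Suc k)"
      by (intro gen_ideal_mult gen_ideal_generator) simp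
    consider "b = 0"
      | (cancel) "deg G (a * f k) = deg G b" "leading_form G a * F k + leading_form G b = 0"
      | (no_cancel) "b \<noteq> 0"
          "deg G (a * f k) = deg G b \<Longrightarrow> leading_form G a * F k + leading_form G b \<noteq> 0"
      by blast
    then show ?thesis
    proof cases
      case 1
      then show ?thesis using lf_afk A by simp
    next
      case no_cancel
      have B: "leading_form G b \<in> gen_ideal F (Suc k)" using lower_Suc less.prems(1) no_cancel(1) .
      have "leading_form G (a * f k + b) \<in>
          {leading_form G a * F k, leading_form G b, leading_form G a * F k + leading_form G b}"
        using leading_form_add_cases[OF graded _ no_cancel(1), of "a * f k"] no_cancel(2) a fk(1)
        by (simp add: lf_afk)
      then show ?thesis using A B gen_ideal_add[OF A B] by auto
    next
      case cancel
      \<comment> \<open>the leading forms cancel, so regularity lets us lower the degree of a\<close>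
      have "leading_form G a * F k = - leading_form G b"
        using cancel(2) by (simp add: eq_neg_iff_add_eq_0)
      moreover have "b \<noteq> 0"
        using cancel(2) lf_afk leading_form_nonzero[OF graded, of "a * f k"]
          leading_form_zero[OF graded] a fk(1) by auto
      ultimately have "leading_form G a * F k \<in> gen_ideal F k"
        using gen_ideal_uminus[OF lower[OF less.prems(1)]] by simp
      then obtain s where s: "s \<in> gen_ideal f k" "\<And>m. deg G a \<le> m \<Longrightarrow> component G m (a - s) = 0"
        using leading_form_reduction[OF graded, of k f F a] regular f by auto
      have b': "b + f k * s \<in> gen_ideal f k" by (intro gen_ideal_add less.prems(1) gen_ideal_mult s(1))
      have eq: "a * f k + b = (a - s) * f k + (b + f k * s)" by (simp add: algebra_simps)
      show ?thesis
      proof (cases "a - s = 0")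
        case True
        then have g_eq: "a * f k + b = b + f k * s" using eq by simp
        show ?thesis unfolding g_eq using lower_Suc[OF b'] less.prems(2)[unfolded g_eq] .
      next
        case False
        then have "deg G (a - s) < deg G a" using s(2) by (rule deg_less[OF graded])
        then show ?thesis using b' less.prems(2) unfolding eq by (rule less.hyps)
      qed
    qed
  qed
qed

lemma leading_form_in_gen_ideal:
  assumes "\<forall>j<k. f j \<noteq> 0 \<and> leading_form G (f j) = F j"
    and "\<forall>j<k. \<forall>x. x * F j \<in> gen_ideal F j \<longrightarrow> x \<in> gen_ideal F j"
  shows "g \<in> gen_ideal f k \<Longrightarrow> g \<noteq> 0 \<Longrightarrow> leading_form G g \<in> gen_ideal F k"
  using assms
proof (induction k arbitrary: g)
  case 0
  then show ?case by simp
next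
  case (Suc k)
  obtain a b where b: "b \<in> gen_ideal f k" and g: "g = a * f k + b"
    using Suc.prems(1) by (rule gen_ideal_SucE)
  have "leading_form G (a * f k + b) \<in> gen_ideal F (Suc k)"
  proof (rule leading_form_mult_add_in_gen_ideal_Suc)
    show "\<forall>j<Suc k. f j \<noteq> 0 \<and> leading_form G (f j) = F j" by (fact Suc.prems(3))
    show "x \<in> gen_ideal F k" if "x * F k \<in> gen_ideal F k" for x
      using Suc.prems(4) that lessI by blast
    show "leading_form G h \<in> gen_ideal F k" if "h \<in> gen_ideal f k" "h \<noteq> 0" for h
      using Suc.IH[OF that] Suc.prems(3,4) less_SucI by blast
    show "b \<in> gen_ideal f k" "a * f k + b \<noteq> 0" using b Suc.prems(2) g by simp_all
  qed
  then show ?case using g by simp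
qed

lemma prime_ideal_gen_ideal_if_leading_forms:
  assumes lf_f: "\<forall>j<n. leading_form G (f j) = F j"
    and initial: "\<And>g. g \<in> gen_ideal f n \<Longrightarrow> g \<noteq> 0 \<Longrightarrow> leading_form G g \<in> gen_ideal F n"
    and prime: "prime_ideal (gen_ideal F n)"
  shows "prime_ideal (gen_ideal f n)"
proof -
  let ?J = "gen_ideal f n" and ?P = "gen_ideal F n"
  have P_proper: "?P \<noteq> UNIV" and P_prime: "\<And>a b. a * b \<in> ?P \<Longrightarrow> a \<in> ?P \<or> b \<in> ?P"
    using prime unfolding prime_ideal_def by blast+
  have "?J \<noteq> UNIV"
  proof
    assume "?J = UNIV"
    then have "h \<in> ?P" if "h \<in> G d" for h d
      using initial[of h] leading_form_homogeneous[OF graded that] gen_ideal_zero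
      by (cases "h = 0") auto
    then show False using gen_ideal_eq_UNIV_if_grades_contained[OF graded] P_proper by blast
  qed
  moreover have "a \<in> ?J \<or> b \<in> ?J" if ab: "a * b \<in> ?J" for a b
  proof (rule ccontr)
    assume "\<not> (a \<in> ?J \<or> b \<in> ?J)"
    then obtain a' b' where a': "a' - a \<in> ?J" "a' \<noteq> 0" "leading_form G a' \<notin> ?P"
      and b': "b' - b \<in> ?J" "b' \<noteq> 0" "leading_form G b' \<notin> ?P"
      using exists_congruent_leading_form_notin[OF graded lf_f, of a]
        exists_congruent_leading_form_notin[OF graded lf_f, of b] by blast
    have "a' * b' = a * b + (b' * (a' - a) + a * (b' - b))" by (simp add: algebra_simps)
    then have "a' * b' \<in> ?J" using ab a'(1) b'(1) by (simp add: gen_ideal_add gen_ideal_mult)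
    then have "leading_form G a' * leading_form G b' \<in> ?P"
      using initial[of "a' * b'"] leading_form_mult[OF a'(2) b'(2)] a'(2) b'(2) by simp
    then show False using P_prime a'(3) b'(3) by blast
  qed
  ultimately show ?thesis
    unfolding prime_ideal_def using gen_ideal_zero gen_ideal_add gen_ideal_mult by blast
qed

end

theorem mainTheorem14:
  fixes G :: "nat \<Rightarrow> 'a::idom set"
    and F f :: "nat \<Rightarrow> 'a"
    and n :: nat
  assumes "graded_ring G"
    and "\<forall>i<n. homogeneous G (F i)"
    and "regular_sequence F n"
    and "prime_ideal (gen_ideal F n)"
    and "\<forall>i<n. f i \<noteq> 0 \<and> leading_form G (f i) = F i"
  shows "prime_ideal (gen_ideal f n)"
proof (rule prime_ideal_gen_ideal_if_leading_forms[OF assms(1) _ _ assms(4)])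
  show "\<forall>j<n. leading_form G (f j) = F j" using assms(5) by blast
  have "\<forall>j<n. \<forall>x. x * F j \<in> gen_ideal F j \<longrightarrow> x \<in> gen_ideal F j"
    using assms(3) unfolding regular_sequence_def by blast
  then show "leading_form G g \<in> gen_ideal F n" if "g \<in> gen_ideal f n" "g \<noteq> 0" for g
    using leading_form_in_gen_ideal[OF assms(1,5)] that by blast
qed

end
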